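(* Let $Y_1=1$ and, for $n\ge2$, $Y_n=\lfloor (n+I)/2\rfloor$ with $I\sim$ Bernoulli$(1/2)$. Consider the leader election process started with $n$ players and stopped as soon as at most $3$ players remain, and let $\pi_i(n)$ be the probability that it ends with exactly $i$ players. Then for every $n\ge2$, $\pi_2(n)=\psi_2(n)$ where $\psi_2(2^x)=|2^{1+x-\lfloor x\rfloor}-3|$ for real $x\ge1$; moreover $\pi_3(n)=1-\pi_2(n)$ and $\pi_1(n)=0$ for $n\ge2$.
   Context: The process: $N_0=n$ and $N_{k+1}$ has the law of $Y_{N_k}$ given the past; it stops at the first $k$ with $N_k\le 3$, ending with $N_k$ players. *)

theory Defs
  imports "HOL-Probability.Probability"
begin

definition Ylaw :: "nat \<Rightarrow> nat pmf" where
  "Ylaw n = (if n \<le> 1 then return_pmf 1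
             else map_pmf (\<lambda>I. (n + (if I then 1 else 0)) div 2) (bernoulli_pmf (1/2)))"

text \<open>Law of the stopped chain N_{min(k,tau)}, started at N_0 = n, where tau is the first
  time with N_k <= 3 (after stopping the chain stays put).\<close>
primrec stopped_law :: "nat \<Rightarrow> nat \<Rightarrow> nat pmf" where
  "stopped_law n 0 = return_pmf n"
| "stopped_law n (Suc k) =
     bind_pmf (stopped_law n k) (\<lambda>m. if m \<le> 3 then return_pmf m else Ylaw m)"

text \<open>pi_i(n) = P(tau < infinity and N_tau = i) = lim_k P(N_{min(k,tau)} = i) for i <= 3.\<close>
definition leader_pi :: "nat \<Rightarrow> nat \<Rightarrow> real" where
  "leader_pi i n = lim (\<lambda>k. pmf (stopped_law n k) i)"

text \<open>psi_2(2^x) = |2^(1 + x - floor x) - 3|, i.e. psi_2(y) with x = log_2 y.\<close>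
definition psi2 :: "real \<Rightarrow> real" where
  "psi2 y = \<bar>2 powr (1 + log 2 y - of_int \<lfloor>log 2 y\<rfloor>) - 3\<bar>"

end

theory Submission
  imports Defs
begin

(* After one step from n >= 4 the chain sits at n div 2 or (n+1) div 2, each
   with probability 1/2, and both halves are again >= 2.  So the absorption probabilities
   at 2 and 3 satisfy the "halving" recursion
       f n = (f (n div 2) + f ((n+1) div 2)) / 2,   for n >= 4,
   with boundary values f 2 = 1, f 3 = 0 for the absorption at 2.
   We show that psi2 obeys the same recursion: on the dyadic block 2^j <= m <= 2^(j+1) it
   is the piecewise linear function |2m/2^j - 3|, the two halves of n lie in the same block,
   and the two terms inside the absolute values have the same sign. *)

definition step_law :: "nat \<Rightarrow> nat pmf" where
  "step_law m = (if m \<le> 3 then return_pmf m else Ylaw m)"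

text \<open>First-step decomposition: the definition of \<open>stopped_law\<close> conditions on the last
  step, but the recursion over the starting point needs conditioning on the first one.\<close>
lemma stopped_law_Suc_first:
  "stopped_law n (Suc k) = bind_pmf (step_law n) (\<lambda>m. stopped_law m k)"
proof (induction k)
  case 0
  show ?case by (simp add: step_law_def bind_return_pmf bind_return_pmf')
next
  case (Suc k)
  have "stopped_law n (Suc (Suc k)) = bind_pmf (stopped_law n (Suc k)) step_law"
    by (simp add: step_law_def[abs_def])
  also have "\<dots> = bind_pmf (step_law n) (\<lambda>m. bind_pmf (stopped_law m k) step_law)"
    by (simp only: Suc.IH bind_assoc_pmf)
  also have "\<dots> = bind_pmf (step_law n) (\<lambda>m. stopped_law m (Suc k))"
    by (simp add: step_law_def[abs_def])
  finally show ?case .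
qed

lemma stopped_law_absorbed: "n \<le> 3 \<Longrightarrow> stopped_law n k = return_pmf n"
  by (induction k) (auto simp: bind_return_pmf)

lemma pmf_stopped_law_halving:
  assumes "n \<ge> 4"
  shows "pmf (stopped_law n (Suc k)) i =
           (pmf (stopped_law (n div 2) k) i + pmf (stopped_law ((n + 1) div 2) k) i) / 2"
proof -
  have "step_law n = map_pmf (\<lambda>I. (n + (if I then 1 else 0)) div 2) (bernoulli_pmf (1/2))"
    using assms by (simp add: step_law_def Ylaw_def)
  then show ?thesis
    by (simp only: stopped_law_Suc_first)
       (simp add: map_pmf_def bind_assoc_pmf bind_return_pmf pmf_bind)
qed

text \<open>On the dyadic block \<open>2^j \<le> m \<le> 2^(j+1)\<close>, psi2 is the linear function
  \<open>|2m/2^j - 3|\<close>; at the right endpoint both sides equal 1, although the floor of the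
  logarithm jumps there.\<close>
lemma psi2_dyadic_block:
  assumes lower: "2 ^ j \<le> m" and upper: "m \<le> (2::nat) ^ (j + 1)"
  shows "psi2 (real m) = \<bar>2 * real m / 2 ^ j - 3\<bar>"
proof (cases "m = 2 ^ (j + 1)")
  case True
  have "log 2 (real m) = real (j + 1)"
    unfolding True of_nat_power of_nat_numeral by (rule log_pow_cancel) auto
  then show ?thesis
    using True by (simp add: psi2_def)
next
  case False
  with upper have "m < 2 ^ (j + 1)" by simp
  then have floor_log: "\<lfloor>log 2 (real m)\<rfloor> = int j"
    using floor_log_nat_eq_if[of 2 j m] lower by simp
  have m_pos: "real m > 0"
    using lower by (metis of_nat_0_less_iff order_less_le_trans pos2 zero_less_power)
  have "2 powr (1 + log 2 (real m) - real j) = 2 * 2 powr (log 2 (real m)) / 2 powr real j"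
    by (simp add: powr_add powr_diff)
  also have "\<dots> = 2 * real m / 2 ^ j"
    using m_pos by (simp add: powr_realpow)
  finally show ?thesis
    unfolding psi2_def floor_log by simp
qed

lemma psi2_2: "psi2 2 = 1"
  using psi2_dyadic_block[of 1 2] by simp

lemma psi2_3: "psi2 3 = 0"
  using psi2_dyadic_block[of 1 3] by simp

text \<open>Two integers at distance at most one never have strictly opposite signs, so the
  triangle inequality is an equality for them.  This is what makes psi2 additive across the
  two halves of \<open>n\<close>.\<close>
lemma abs_add_adjacent_int:
  fixes x y :: int
  assumes "x \<le> y" "y \<le> x + 1"
  shows "\<bar>x + y\<bar> = \<bar>x\<bar> + \<bar>y\<bar>"
  using assms by (cases "x \<ge> 0") (auto simp: abs_if)

lemma psi2_halving:
  assumes "n \<ge> 4"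
  shows "psi2 (real n) = (psi2 (real (n div 2)) + psi2 (real ((n + 1) div 2))) / 2"
proof -
  obtain k where block: "2 ^ k \<le> n" "n < 2 ^ (k + 1)"
    using ex_power_ivl1[of 2 n] assms by auto
  have "k \<ge> 2"
  proof (rule ccontr)
    assume "\<not> k \<ge> 2"
    then have "(2::nat) ^ (k + 1) \<le> 2 ^ 2" by (intro power_increasing) auto
    with block assms show False by simp
  qed
  then obtain j where k: "k = j + 2" by (metis add.commute le_Suc_ex)
  define a b where "a = n div 2" and "b = (n + 1) div 2"
  define c :: real where "c = 2 ^ j"
  have c_pos: "c > 0" by (simp add: c_def)
  have "a + b = n" unfolding a_def b_def by presburger
  then have sum_halves: "real n = real a + real b" by simp
  have halves_in_block: "2 ^ (j + 1) \<le> a" "a \<le> 2 ^ (j + 2)" "2 ^ (j + 1) \<le> b" "b \<le> 2 ^ (j + 2)"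
    using block unfolding k a_def b_def by auto
  have psi_n: "psi2 (real n) = \<bar>real a + real b - 6 * c\<bar> / (2 * c)"
    using psi2_dyadic_block[of k n] block c_pos unfolding sum_halves k c_def
    by (simp add: power_add field_simps abs_divide)
  have psi_a: "psi2 (real a) = \<bar>real a - 3 * c\<bar> / c"
    using psi2_dyadic_block[of "j + 1" a] halves_in_block c_pos unfolding c_def
    by (simp add: field_simps abs_divide)
  have psi_b: "psi2 (real b) = \<bar>real b - 3 * c\<bar> / c"
    using psi2_dyadic_block[of "j + 1" b] halves_in_block c_pos unfolding c_def
    by (simp add: field_simps abs_divide)
  have "b = a \<or> b = a + 1" unfolding a_def b_def by presburger
  then have "\<bar>(int a - 3 * 2 ^ j) + (int b - 3 * 2 ^ j)\<bar>
               = \<bar>int a - 3 * 2 ^ j\<bar> + \<bar>int b - 3 * 2 ^ j\<bar>"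
    by (intro abs_add_adjacent_int) auto
  then have "real_of_int \<bar>(int a - 3 * 2 ^ j) + (int b - 3 * 2 ^ j)\<bar>
               = real_of_int (\<bar>int a - 3 * 2 ^ j\<bar> + \<bar>int b - 3 * 2 ^ j\<bar>)"
    by (rule arg_cong)
  then have "\<bar>real a + real b - 6 * c\<bar> = \<bar>real a - 3 * c\<bar> + \<bar>real b - 3 * c\<bar>"
    by (simp add: c_def algebra_simps)
  then show ?thesis
    unfolding psi_n psi_a psi_b a_def[symmetric] b_def[symmetric] using c_pos by (simp add: field_simps)
qed

text \<open>Starting from \<open>n \<ge> 2\<close>, every non-absorbed step at least halves the state, so after
  \<open>k \<ge> n\<close> steps the chain has been absorbed in 2 or 3, with probability psi2 n at 2.
  The proof is a strong induction on \<open>n\<close> using the two halving recursions.\<close>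
lemma stopped_law_absorption:
  assumes "n \<ge> 2" "k \<ge> n"
  shows "pmf (stopped_law n k) 2 = psi2 (real n)
       \<and> pmf (stopped_law n k) 3 = 1 - psi2 (real n)
       \<and> pmf (stopped_law n k) 1 = 0"
  using assms
proof (induction n arbitrary: k rule: less_induct)
  case (less n)
  show ?case
  proof (cases "n \<le> 3")
    case True
    with less.prems have "n = 2 \<or> n = 3" by auto
    then show ?thesis using stopped_law_absorbed[of n k] psi2_2 psi2_3 by auto
  next
    case False
    with less.prems obtain k' where k: "k = Suc k'" by (cases k) auto
    have lower_half: "n div 2 < n" "n div 2 \<ge> 2" "k' \<ge> n div 2"
      using False less.prems k by auto
    have upper_half: "(n + 1) div 2 < n" "(n + 1) div 2 \<ge> 2" "k' \<ge> (n + 1) div 2"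
      using False less.prems k by auto
    from False have "n \<ge> 4" by simp
    show ?thesis
      unfolding k pmf_stopped_law_halving[OF \<open>n \<ge> 4\<close>] psi2_halving[OF \<open>n \<ge> 4\<close>]
      using less.IH[OF lower_half] less.IH[OF upper_half] by (simp add: field_simps)
  qed
qed

lemma lim_eventually_const:
  assumes "\<And>k. k \<ge> n \<Longrightarrow> f k = (c::real)"
  shows "lim f = c"
proof (rule limI)
  show "f \<longlonglongrightarrow> c"
    by (rule tendsto_eventually) (use assms in \<open>auto simp: eventually_sequentially\<close>)
qed

theorem mainTheorem7:
  fixes n :: nat
  assumes "n \<ge> 2"
  shows "leader_pi 2 n = psi2 (real n)
       \<and> leader_pi 3 n = 1 - leader_pi 2 n
       \<and> leader_pi 1 n = 0"
proof -
  note absorbed = stopped_law_absorption[OF assms]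
  have "leader_pi 2 n = psi2 (real n)"
    unfolding leader_pi_def by (rule lim_eventually_const) (use absorbed in blast)
  moreover have "leader_pi 3 n = 1 - psi2 (real n)"
    unfolding leader_pi_def by (rule lim_eventually_const) (use absorbed in blast)
  moreover have "leader_pi 1 n = 0"
    unfolding leader_pi_def by (rule lim_eventually_const) (use absorbed in blast)
  ultimately show ?thesis by simp
qed

end
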